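(* Let $t$ be a positive integer. The map sending a partition to its $V_{2t+2,t}$-coding is injective on $\mathcal{DD}_{(2t+2)}$, and the map sending a partition to its $V_{2t,t}$-coding is injective on $\mathcal{SC}_{(2t)}$; that is, each element of $\mathcal{DD}_{(2t+2)}$ (respectively $\mathcal{SC}_{(2t)}$) is in bijective correspondence with its $V_{g,t}$-coding, where $g=2t+2$ (respectively $g=2t$).
   Context: A partition $\lambda=(\lambda_1\geq\lambda_2\geq\dots)$ (with $\lambda_i=0$ for $i>\ell(\lambda)$) has Ferrers diagram consisting of boxes $(i,j)$ with $1\leq j\leq\lambda_i$; $\lambda'$ is the conjugate partition. The hook length of a box $(i,j)$ is $\lambda_i-j+\lambda'_j-i+1$. The Durfee size is $d_\lambda=\max\{s:\lambda_s\geq s\}$. A partition is a $k$-core if none of its hook lengths is divisible by $k$. $\mathcal{DD}$ is the set of partitions $\lambda$ with $\lambda_i=\lambda'_i+1$ for all $1\leq i\leq d_\lambda$; $\mathcal{SC}$ is the set of self-conjugate partitions ($\lambda=\lambda'$); $\mathcal{DD}_{(k)}$, $\mathcal{SC}_{(k)}$ denote their subsets of $k$-cores. $V_{g,t}$-coding (for integers $1\leq t\leq g$): for a partition $\lambda$ and each residue $r\in\{0,\dots,g-1\}$, let $\beta_r=g+\max\{\lambda_j-j: j\geq 1,\ \lambda_j-j\equiv r \pmod g\}$ ($j$ ranging over all positive integers, $\lambda_j=0$ for $j>\ell(\lambda)$). These are distinct; list them decreasingly $\beta_{\sigma(1)}>\dots>\beta_{\sigma(g)}$. The $V_{g,t}$-coding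 of $\lambda$ is $(v_1,\dots,v_t)=(\beta_{\sigma(1)},\dots,\beta_{\sigma(t)})\in\mathbb{Z}^t$. *)

theory Defs
  imports Main
begin

definition is_partition :: "nat list \<Rightarrow> bool" where
  "is_partition la \<longleftrightarrow> sorted_wrt (\<ge>) la \<and> 0 \<notin> set la"

definition part :: "nat list \<Rightarrow> nat \<Rightarrow> nat" where
  "part la i = (if 1 \<le> i \<and> i \<le> length la then la ! (i - 1) else 0)"

definition conjp :: "nat list \<Rightarrow> nat \<Rightarrow> nat" where
  "conjp la j = card {i. 1 \<le> i \<and> i \<le> length la \<and> j \<le> part la i}"

definition boxes :: "nat list \<Rightarrow> (nat \<times> nat) set" where
  "boxes la = {(i, j). 1 \<le> i \<and> 1 \<le> j \<and> j \<le> part la i}"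

definition hook :: "nat list \<Rightarrow> nat \<Rightarrow> nat \<Rightarrow> int" where
  "hook la i j = int (part la i) - int j + int (conjp la j) - int i + 1"

definition durfee :: "nat list \<Rightarrow> nat" where
  "durfee la = Max ({0} \<union> {s. 1 \<le> s \<and> s \<le> length la \<and> s \<le> part la s})"

definition is_core :: "nat \<Rightarrow> nat list \<Rightarrow> bool" where
  "is_core k la \<longleftrightarrow> (\<forall>(i, j) \<in> boxes la. \<not> (int k dvd hook la i j))"

definition is_DD :: "nat list \<Rightarrow> bool" where
  "is_DD la \<longleftrightarrow> (\<forall>i. 1 \<le> i \<and> i \<le> durfee la \<longrightarrow> part la i = conjp la i + 1)"

definition is_SC :: "nat list \<Rightarrow> bool" where
  "is_SC la \<longleftrightarrow> (\<forall>i\<ge>1. part la i = conjp la i)"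

definition DD_core :: "nat \<Rightarrow> nat list set" where
  "DD_core k = {la. is_partition la \<and> is_DD la \<and> is_core k la}"

definition SC_core :: "nat \<Rightarrow> nat list set" where
  "SC_core k = {la. is_partition la \<and> is_SC la \<and> is_core k la}"

definition beta :: "nat \<Rightarrow> nat list \<Rightarrow> nat \<Rightarrow> int" where
  "beta g la r = int g + Sup {int (part la j) - int j | j. 1 \<le> j \<and>
       (int (part la j) - int j) mod int g = int r}"

definition Vcoding :: "nat \<Rightarrow> nat \<Rightarrow> nat list \<Rightarrow> int list" where
  "Vcoding g t la = take t (rev (sort (map (beta g la) [0..<g])))"

end

theory Submission
  imports Defs
begin

text \<open>Encode a partition by its Maya set S = {lambda_j - j | j >= 1}, which determines it
  and whose complement is {j - 1 - lambda'_j | j >= 1}. The Maya set of a g-core is closed under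
  x \<mapsto> x - g, so it is determined by the largest element of each residue class mod g, that
  is, by beta_0, ..., beta_(g-1). For partitions in DD the set S is antisymmetric (0 \<notin> S, and
  x \<in> S iff -x \<notin> S for x \<noteq> 0); for self-conjugate ones x \<in> S iff -1-x \<notin> S. Hence the betas
  pair up as beta_r + beta_(g-r) = g, resp. beta_r + beta_(g-1-r) = g - 1, and in each pair
  exactly one member lies above the midpoint. So the t largest betas are exactly those above
  the midpoint; they determine their partners, hence all betas, hence the partition.\<close>

section \<open>Maya sets of partitions\<close>

definition maya_set :: "nat list \<Rightarrow> int set" where
  "maya_set la = {int (part la j) - int j | j. 1 \<le> j}"

lemma part_antimono:
  assumes "is_partition la" "1 \<le> i" "i \<le> i'"
  shows "part la i' \<le> part la i"
proof (cases "i' \<le> length la")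
  case True
  have "sorted_wrt (\<ge>) la" using assms(1) by (simp add: is_partition_def)
  then have "la ! (i - 1) \<ge> la ! (i' - 1)" if "i < i'"
    using True that assms(2) by (auto simp: sorted_wrt_iff_nth_less)
  then show ?thesis using True assms by (cases "i = i'") (auto simp: part_def)
qed (simp add: part_def)

lemma part_pos_iff:
  assumes "is_partition la" "1 \<le> i"
  shows "0 < part la i \<longleftrightarrow> i \<le> length la"
proof
  assume "i \<le> length la"
  then have "la ! (i - 1) \<in> set la" using assms by auto
  moreover have "0 \<notin> set la" using assms(1) by (simp add: is_partition_def)
  ultimately have "la ! (i - 1) \<noteq> 0" by metis
  then show "0 < part la i" using assms \<open>i \<le> length la\<close> by (simp add: part_def)
qed (auto simp: part_def split: if_splits)

lemma le_part_iff_le_conjp: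
  assumes "is_partition la" "1 \<le> i" "1 \<le> j"
  shows "j \<le> part la i \<longleftrightarrow> i \<le> conjp la j"
proof -
  define A where "A = {i. 1 \<le> i \<and> i \<le> length la \<and> j \<le> part la i}"
  have conjp_eq: "conjp la j = card A" by (simp add: conjp_def A_def)
  have mem_A: "i' \<in> A \<longleftrightarrow> 1 \<le> i' \<and> j \<le> part la i'" for i'
    using part_pos_iff[OF assms(1), of i'] assms(3) unfolding A_def by auto
  show ?thesis
  proof
    assume "j \<le> part la i"
    then have "{1..i} \<subseteq> A"
      using mem_A part_antimono[OF assms(1)] by (meson atLeastAtMost_iff le_trans subsetI)
    then have "card {1..i} \<le> card A" by (intro card_mono) (auto simp: A_def)
    then show "i \<le> conjp la j" by (simp add: conjp_eq)
  next
    assume "i \<le> conjp la j"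
    show "j \<le> part la i"
    proof (rule ccontr)
      assume "\<not> j \<le> part la i"
      have "A \<subseteq> {1..i-1}"
      proof
        fix x assume "x \<in> A"
        then have "1 \<le> x" "j \<le> part la x" using mem_A by auto
        moreover have "\<not> i \<le> x"
          using part_antimono[OF assms(1,2), of x] \<open>\<not> j \<le> part la i\<close> calculation by linarith
        ultimately show "x \<in> {1..i-1}" by simp
      qed
      then have "card A \<le> card {1..i-1}" by (intro card_mono) auto
      then show False using \<open>i \<le> conjp la j\<close> assms(2) by (simp add: conjp_eq)
    qed
  qed
qed

lemma partition_eqI:
  assumes "is_partition la" "is_partition mu" "\<And>i. 1 \<le> i \<Longrightarrow> part la i = part mu i"
  shows "la = mu"
proof -
  have "i \<le> length la \<longleftrightarrow> i \<le> length mu" if "1 \<le> i" for i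
    using part_pos_iff[OF assms(1) that] part_pos_iff[OF assms(2) that] assms(3)[OF that] by simp
  from this[of "Suc (length la)"] this[of "Suc (length mu)"]
  have len: "length la = length mu" by linarith
  show ?thesis
  proof (rule nth_equalityI[OF len])
    fix i assume "i < length la"
    then show "la ! i = mu ! i" using assms(3)[of "Suc i"] len by (simp add: part_def)
  qed
qed

lemma notin_maya_set_iff:
  assumes "is_partition la"
  shows "y \<notin> maya_set la \<longleftrightarrow> (\<exists>j\<ge>1. y = int j - 1 - int (conjp la j))"
proof
  assume "y \<notin> maya_set la"
  txt \<open>y lies strictly between the values at rows i0 - 1 and i0, so j = y + i0 has
    lambda'_j = i0 - 1.\<close>
  define i0 where "i0 = (LEAST i. 1 \<le> i \<and> int (part la i) - int i < y)"
  define n where "n = Suc (length la + nat \<bar>y\<bar>)"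
  have "1 \<le> n \<and> int (part la n) - int n < y" by (simp add: n_def part_def)
  then have i0: "1 \<le> i0" "int (part la i0) - int i0 < y"
    unfolding i0_def by (metis (mono_tags, lifting) LeastI)+
  have above: "y < int (part la i) - int i" if "1 \<le> i" "i < i0" for i
  proof -
    have "y \<le> int (part la i) - int i" using that not_less_Least unfolding i0_def by force
    moreover have "y \<noteq> int (part la i) - int i"
      using \<open>y \<notin> maya_set la\<close> that(1) by (auto simp: maya_set_def)
    ultimately show ?thesis by simp
  qed
  define j where "j = nat (y + int i0)"
  have j: "1 \<le> j" "int j = y + int i0" using i0 unfolding j_def by linarith+
  have "\<not> i0 \<le> conjp la j"
    using le_part_iff_le_conjp[OF assms i0(1) j(1)] i0 j by linarith
  moreover have "i0 - 1 \<le> conjp la j"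
  proof (cases "i0 = 1")
    case False
    then have "j \<le> part la (i0 - 1)" using above[of "i0 - 1"] i0 j by force
    then show ?thesis using le_part_iff_le_conjp[OF assms _ j(1), of "i0 - 1"] i0 False by simp
  qed simp
  ultimately have "conjp la j = i0 - 1" by simp
  then show "\<exists>j\<ge>1. y = int j - 1 - int (conjp la j)" using i0 j by (intro exI[of _ j]) auto
next
  assume "\<exists>j\<ge>1. y = int j - 1 - int (conjp la j)"
  then obtain j where j: "1 \<le> j" "y = int j - 1 - int (conjp la j)" by blast
  show "y \<notin> maya_set la"
  proof
    assume "y \<in> maya_set la"
    then obtain i where "1 \<le> i" "y = int (part la i) - int i" by (auto simp: maya_set_def)
    then show False using le_part_iff_le_conjp[OF assms \<open>1 \<le> i\<close> j(1)] j by linarith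
  qed
qed

text \<open>If x lies in the Maya set but x - g does not, their rows and columns meet in a box of
  hook length g.\<close>

lemma maya_set_diff_mem:
  assumes "is_partition la" "is_core g la" "1 \<le> g" "x \<in> maya_set la"
  shows "x - int g \<in> maya_set la"
proof (rule ccontr)
  assume "x - int g \<notin> maya_set la"
  then obtain j where j: "1 \<le> j" "x - int g = int j - 1 - int (conjp la j)"
    using notin_maya_set_iff[OF assms(1)] by blast
  obtain i where i: "1 \<le> i" "x = int (part la i) - int i"
    using assms(4) by (auto simp: maya_set_def)
  have "j \<le> part la i"
    using le_part_iff_le_conjp[OF assms(1) i(1) j(1)] i j assms(3) by linarith
  then have "(i, j) \<in> boxes la" using i j by (simp add: boxes_def)
  moreover have "hook la i j = int g" using i j by (simp add: hook_def)
  ultimately show False using assms(2) by (auto simp: is_core_def)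
qed

lemma maya_set_bdd_above:
  assumes "is_partition la"
  shows "bdd_above (maya_set la)"
proof (rule bdd_aboveI)
  fix x assume "x \<in> maya_set la"
  then obtain i where "1 \<le> i" "x = int (part la i) - int i" by (auto simp: maya_set_def)
  then show "x \<le> int (part la 1)" using part_antimono[OF assms, of 1 i] by linarith
qed

lemma atMost_subset_maya_set: "{..- int (Suc (length la))} \<subseteq> maya_set la"
proof
  fix x assume "x \<in> {..- int (Suc (length la))}"
  then have "x = int (part la (nat (- x))) - int (nat (- x))" "1 \<le> nat (- x)"
    by (auto simp: part_def)
  then show "x \<in> maya_set la" unfolding maya_set_def by blast
qed

lemma decreasing_eq_if_range_eq:
  fixes f h :: "nat \<Rightarrow> 'a::linorder"
  assumes "\<And>i j. i < j \<Longrightarrow> f j < f i" "\<And>i j. i < j \<Longrightarrow> h j < h i" "range f = range h"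
  shows "f = h"
proof
  have le: "f n \<le> h n"
    if f_dec: "\<And>i j. i < j \<Longrightarrow> f j < f i" and h_dec: "\<And>i j. i < j \<Longrightarrow> h j < h i"
      and range_eq: "range f = range h" and below: "\<forall>m<n. f m = h m"
    for f h :: "nat \<Rightarrow> 'a" and n
  proof -
    obtain m where m: "f n = h m" using range_eq by (metis rangeE rangeI)
    have "n \<le> m"
    proof (rule ccontr)
      assume "\<not> n \<le> m"
      then have "f n < f m" using f_dec by simp
      then show False using below m \<open>\<not> n \<le> m\<close> by simp
    qed
    then have "h m \<le> h n" using h_dec by (cases "n = m") (auto intro: less_imp_le)
    then show ?thesis using m by simp
  qed
  fix n show "f n = h n"
  proof (induction n rule: less_induct)
    case (less n)
    then show ?case using le[OF assms] le[OF assms(2,1) assms(3)[symmetric]] by (metis antisym)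
  qed
qed

lemma maya_set_eq_range: "maya_set la = range (\<lambda>i. int (part la (Suc i)) - int (Suc i))"
  unfolding maya_set_def
proof (intro equalityI subsetI)
  fix x assume "x \<in> {int (part la j) - int j | j. 1 \<le> j}"
  then obtain j where "1 \<le> j" "x = int (part la j) - int j" by blast
  then show "x \<in> range (\<lambda>i. int (part la (Suc i)) - int (Suc i))"
    by (intro range_eqI[where x = "j - 1"]) simp
next
  fix x assume "x \<in> range (\<lambda>i. int (part la (Suc i)) - int (Suc i))"
  then obtain i where "x = int (part la (Suc i)) - int (Suc i)" by blast
  then show "x \<in> {int (part la j) - int j | j. 1 \<le> j}"
    by (intro CollectI exI[where x = "Suc i"]) simp
qed

lemma inj_on_maya_set: "inj_on maya_set (Collect is_partition)"
proof (rule inj_onI)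
  fix la mu assume la: "la \<in> Collect is_partition" and mu: "mu \<in> Collect is_partition"
    and "maya_set la = maya_set mu"
  define s where "s nu i = int (part nu (Suc i)) - int (Suc i)" for nu i
  have dec: "s nu j < s nu i" if "is_partition nu" "i < j" for nu i j
    using part_antimono[OF that(1), of "Suc i" "Suc j"] that(2) by (simp add: s_def)
  have "range (s la) = range (s mu)"
    using \<open>maya_set la = maya_set mu\<close> by (simp add: maya_set_eq_range s_def)
  then have "s la = s mu" using dec la mu by (intro decreasing_eq_if_range_eq) auto
  then have part_Suc: "part la (Suc i) = part mu (Suc i)" for i by (simp add: s_def fun_eq_iff)
  show "la = mu"
  proof (rule partition_eqI)
    fix i :: nat assume "1 \<le> i"
    then show "part la i = part mu i" using part_Suc[of "i - 1"] by simp
  qed (use la mu in auto)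
qed

section \<open>Abacus configurations\<close>

definition class_max :: "int set \<Rightarrow> int \<Rightarrow> int \<Rightarrow> int" where
  "class_max A g r = Sup {x \<in> A. x mod g = r}"

text \<open>Bead positions on a g-abacus: each runner r is a downward-infinite chain of beads
  ending at class_max A g r.\<close>

locale abacus =
  fixes A :: "int set" and g :: int
  assumes period_pos: "0 < g"
    and diff_period_mem: "x \<in> A \<Longrightarrow> x - g \<in> A"
    and bdd_above: "bdd_above A"
    and lower_subset: "\<exists>n. {..n} \<subseteq> A"
begin

lemma mem_if_le_same_mod:
  assumes "x \<in> A" "y \<le> x" "y mod g = x mod g"
  shows "y \<in> A"
proof -
  have diff_mem: "x - int k * g \<in> A" for k
  proof (induction k)
    case (Suc k)
    then have "x - int k * g - g \<in> A" by (rule diff_period_mem)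
    then show ?case by (simp add: algebra_simps)
  qed (simp add: assms(1))
  obtain k where k: "x - y = g * k" using assms(3) by (metis mod_eq_dvd_iff dvdE)
  then have "0 \<le> k" using assms(2) period_pos by (metis diff_ge_0_iff_ge zero_le_mult_iff not_less)
  then have "y = x - int (nat k) * g" using k by (simp add: algebra_simps)
  then show ?thesis using diff_mem by metis
qed

lemma residue_class_nonempty:
  assumes "0 \<le> r" "r < g"
  shows "\<exists>x\<in>A. x mod g = r"
proof -
  obtain n where n: "{..n} \<subseteq> A" using lower_subset by blast
  have "n - (n - r) mod g \<in> A" using n period_pos by auto
  moreover have "(n - (n - r) mod g) mod g = r"
    using assms by (simp add: mod_diff_right_eq)
  ultimately show ?thesis by blast
qed

lemma class_max:
  assumes "0 \<le> r" "r < g"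
  shows class_max_mem: "class_max A g r \<in> A"
    and class_max_mod: "class_max A g r mod g = r"
    and le_class_max: "x \<in> A \<Longrightarrow> x mod g = r \<Longrightarrow> x \<le> class_max A g r"
proof -
  define C where "C = {x \<in> A. x mod g = r}"
  have "C \<noteq> {}" using residue_class_nonempty[OF assms] by (auto simp: C_def)
  have "bdd_above C" using bdd_above by (auto simp: C_def intro: bdd_above_mono)
  have upper: "x \<le> Sup C" if "x \<in> C" for x by (rule cSup_upper[OF that \<open>bdd_above C\<close>])
  obtain x where "x \<in> C" "Sup C - 1 < x" using less_cSupD[OF \<open>C \<noteq> {}\<close>, of "Sup C - 1"] by auto
  then have "x = Sup C" using upper[of x] by linarith
  then have "Sup C \<in> C" using \<open>x \<in> C\<close> by simp
  then show "class_max A g r \<in> A" "class_max A g r mod g = r"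
    by (auto simp: class_max_def C_def[symmetric]) (auto simp: C_def)
  show "x \<in> A \<Longrightarrow> x mod g = r \<Longrightarrow> x \<le> class_max A g r" for x
    using upper by (auto simp: class_max_def C_def[symmetric]) (auto simp: C_def)
qed

lemma class_max_eqI:
  assumes "m \<in> A" "m mod g = r" "m + g \<notin> A"
  shows "class_max A g r = m"
  unfolding class_max_def
proof (rule cSup_eq_maximum)
  fix x assume x: "x \<in> {x \<in> A. x mod g = r}"
  show "x \<le> m"
  proof (rule ccontr)
    assume "\<not> x \<le> m"
    have "g dvd x - m" using x assms(2) by (auto simp: mod_eq_dvd_iff)
    then have "m + g \<le> x" using \<open>\<not> x \<le> m\<close> by (auto dest: zdvd_imp_le)
    then show False using mem_if_le_same_mod[of x "m + g"] x assms by auto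
  qed
qed (use assms in simp)

lemma mem_iff_le_class_max: "x \<in> A \<longleftrightarrow> x \<le> class_max A g (x mod g)"
  using class_max[of "x mod g"] mem_if_le_same_mod[of "class_max A g (x mod g)" x] period_pos
  by auto

lemma class_max_reflect:
  assumes "0 \<le> r" "r < g" and reflect: "\<And>x. x mod g = r \<Longrightarrow> x \<in> A \<longleftrightarrow> a - x \<notin> A"
  shows "class_max A g r + class_max A g ((a - r) mod g) = a - g"
proof -
  define m where "m = class_max A g r"
  have m: "m \<in> A" "m mod g = r" using class_max[OF assms(1,2)] by (auto simp: m_def)
  have "m + g \<notin> A" using le_class_max[OF assms(1,2), of "m + g"] m period_pos by (auto simp: m_def)
  then have "a - m - g \<in> A" using reflect[of "m + g"] m by (simp add: diff_diff_eq)
  moreover have "a - m - g + g \<notin> A" using reflect[of m] m by simp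
  moreover have "(a - m - g) mod g = (a - r) mod g"
  proof -
    have "(a - m - g) mod g = (a - m) mod g" using mod_add_self2[of "a - m - g" g] by simp
    also have "\<dots> = (a - r) mod g" using m(2) by (metis mod_diff_right_eq)
    finally show ?thesis .
  qed
  ultimately have "class_max A g ((a - r) mod g) = a - m - g" by (intro class_max_eqI)
  then show ?thesis by (simp add: m_def)
qed

end

section \<open>Beta numbers of cores\<close>

lemma abacus_maya_set:
  assumes "is_partition la" "is_core g la" "1 \<le> g"
  shows "abacus (maya_set la) (int g)"
proof
  show "0 < int g" using assms(3) by simp
  show "x - int g \<in> maya_set la" if "x \<in> maya_set la" for x
    using maya_set_diff_mem[OF assms that] .
  show "bdd_above (maya_set la)" using maya_set_bdd_above[OF assms(1)] .
  show "\<exists>n. {..n} \<subseteq> maya_set la" using atMost_subset_maya_set by blast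
qed

lemma beta_eq_class_max: "beta g la r = int g + class_max (maya_set la) (int g) (int r)"
proof -
  have "{int (part la j) - int j | j. 1 \<le> j \<and> (int (part la j) - int j) mod int g = int r}
      = {x \<in> maya_set la. x mod int g = int r}"
    unfolding maya_set_def by blast
  then show ?thesis unfolding beta_def class_max_def by simp
qed

lemma beta_mod:
  assumes "is_partition la" "is_core g la" "r < g"
  shows "beta g la r mod int g = int r"
proof -
  interpret abacus "maya_set la" "int g" using abacus_maya_set assms by simp
  show ?thesis using class_max_mod[of "int r"] assms(3) by (simp add: beta_eq_class_max)
qed

lemma beta_neq_if_neq:
  assumes "is_partition la" "is_core g la" "r < g" "s < g" "r \<noteq> s"
  shows "beta g la r \<noteq> int s"
  using beta_mod[OF assms(1-3)] assms(4,5) by auto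

lemma partition_eq_if_beta_eq:
  assumes "is_partition la" "is_core g la" "is_partition mu" "is_core g mu" "1 \<le> g"
    and beta_eq: "\<And>r. r < g \<Longrightarrow> beta g la r = beta g mu r"
  shows "la = mu"
proof -
  interpret L: abacus "maya_set la" "int g" using abacus_maya_set assms by simp
  interpret U: abacus "maya_set mu" "int g" using abacus_maya_set assms by simp
  have "x \<in> maya_set la \<longleftrightarrow> x \<in> maya_set mu" for x
  proof -
    define r where "r = nat (x mod int g)"
    have "r < g" "int r = x mod int g" using assms(5) by (auto simp: r_def nat_less_iff)
    then have "class_max (maya_set la) (int g) (x mod int g)
        = class_max (maya_set mu) (int g) (x mod int g)"
      using beta_eq[of r] by (simp add: beta_eq_class_max)
    then show ?thesis using L.mem_iff_le_class_max[of x] U.mem_iff_le_class_max[of x] by simp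
  qed
  then have "maya_set la = maya_set mu" by (rule set_eqI)
  then show ?thesis using inj_on_maya_set assms(1,3) by (auto dest: inj_onD)
qed

section \<open>Symmetries of DD and self-conjugate cores\<close>

lemma le_durfee:
  assumes "is_partition la" "1 \<le> i" "i \<le> part la i"
  shows "i \<le> durfee la"
proof -
  have "i \<le> length la" using part_pos_iff[OF assms(1,2)] assms(2,3) by simp
  then have "i \<in> {0} \<union> {s. 1 \<le> s \<and> s \<le> length la \<and> s \<le> part la s}" using assms by simp
  then show ?thesis unfolding durfee_def by (rule Max_ge[rotated]) auto
qed

lemma DD_part_eq_Suc_conjp:
  assumes "is_partition la" "is_DD la" "1 \<le> i" "i \<le> part la i"
  shows "part la i = conjp la i + 1"
  using assms le_durfee[OF assms(1,3,4)] unfolding is_DD_def by blast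

lemma maya_set_DD:
  assumes "is_partition la" "is_DD la"
  shows zero_notin_maya_set_DD: "0 \<notin> maya_set la"
    and maya_set_DD_reflect: "x \<noteq> 0 \<Longrightarrow> x \<in> maya_set la \<longleftrightarrow> - x \<notin> maya_set la"
proof -
  have nonneg: "- x \<notin> maya_set la" if x: "0 \<le> x" "x \<in> maya_set la" for x
  proof -
    obtain i where i: "1 \<le> i" "x = int (part la i) - int i"
      using x(2) by (auto simp: maya_set_def)
    then have "part la i = conjp la i + 1"
      using DD_part_eq_Suc_conjp[OF assms i(1)] x(1) by linarith
    then have "- x = int i - 1 - int (conjp la i)" using i by simp
    then show ?thesis using notin_maya_set_iff[OF assms(1)] i(1) by blast
  qed
  have pos: "x \<in> maya_set la" if x: "0 < x" "- x \<notin> maya_set la" for x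
  proof -
    obtain j where j: "1 \<le> j" "- x = int j - 1 - int (conjp la j)"
      using notin_maya_set_iff[OF assms(1)] x(2) by blast
    then have "j \<le> part la j" using le_part_iff_le_conjp[OF assms(1) j(1) j(1)] x(1) by linarith
    then have "part la j = conjp la j + 1" using DD_part_eq_Suc_conjp[OF assms j(1)] by simp
    then have "x = int (part la j) - int j" using j by simp
    then show ?thesis using j(1) by (auto simp: maya_set_def)
  qed
  show "0 \<notin> maya_set la" using nonneg[of 0] by auto
  show "x \<in> maya_set la \<longleftrightarrow> - x \<notin> maya_set la" if "x \<noteq> 0"
  proof (cases "0 < x")
    case True
    then show ?thesis using nonneg pos by auto
  next
    case False
    then have "0 < - x" using that by simp
    then show ?thesis using nonneg[of "- x"] pos[of "- x"] by auto
  qed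
qed

lemma maya_set_SC_reflect:
  assumes "is_partition la" "is_SC la"
  shows "x \<in> maya_set la \<longleftrightarrow> - 1 - x \<notin> maya_set la"
proof -
  have "x \<in> maya_set la \<longleftrightarrow> (\<exists>j\<ge>1. x = int (part la j) - int j)"
    by (auto simp: maya_set_def)
  also have "\<dots> \<longleftrightarrow> (\<exists>j\<ge>1. - 1 - x = int j - 1 - int (conjp la j))"
    using assms(2) by (auto simp: is_SC_def)
  also have "\<dots> \<longleftrightarrow> - 1 - x \<notin> maya_set la" using notin_maya_set_iff[OF assms(1)] by simp
  finally show ?thesis .
qed

lemma of_nat_diff_period_mod:
  assumes "k < g"
  shows "(int k - int g) mod int g = int k"
  using mod_add_self2[of "int k - int g" "int g"] assms by simp

lemma beta_DD_core:
  assumes "la \<in> DD_core g" "1 \<le> g"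
  shows beta_DD_core_zero: "beta g la 0 = 0"
    and beta_DD_core_reflect: "0 < r \<Longrightarrow> r < g \<Longrightarrow> beta g la r + beta g la (g - r) = int g"
proof -
  have la: "is_partition la" "is_DD la" "is_core g la" using assms(1) by (auto simp: DD_core_def)
  interpret abacus "maya_set la" "int g" using abacus_maya_set la assms(2) by simp
  note reflect = maya_set_DD_reflect[OF la(1,2)]
  note zero_notin = zero_notin_maya_set_DD[OF la(1,2)]
  have "int g \<notin> maya_set la" using diff_period_mem[of "int g"] zero_notin by auto
  then have "- int g \<in> maya_set la" using reflect[of "int g"] assms(2) by simp
  then have "class_max (maya_set la) (int g) 0 = - int g"
    using zero_notin by (intro class_max_eqI) auto
  then show "beta g la 0 = 0" by (simp add: beta_eq_class_max)
  show "beta g la r + beta g la (g - r) = int g" if r: "0 < r" "r < g"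
  proof -
    have reflect_r: "x \<in> maya_set la \<longleftrightarrow> 0 - x \<notin> maya_set la" if "x mod int g = int r" for x
    proof -
      have "x \<noteq> 0" using that r by auto
      then show ?thesis using reflect[of x] by simp
    qed
    have "class_max (maya_set la) (int g) (int r)
        + class_max (maya_set la) (int g) ((0 - int r) mod int g) = 0 - int g"
      by (rule class_max_reflect[OF _ _ reflect_r]) (use r in auto)
    moreover have "(0 - int r) mod int g = int (g - r)"
      using of_nat_diff_period_mod[of "g - r" g] r by (simp add: of_nat_diff)
    ultimately show ?thesis by (simp add: beta_eq_class_max)
  qed
qed

lemma beta_SC_core_reflect:
  assumes "la \<in> SC_core g" "r < g"
  shows "beta g la r + beta g la (g - 1 - r) = int g - 1"
proof -
  have la: "is_partition la" "is_SC la" "is_core g la" using assms(1) by (auto simp: SC_core_def)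
  interpret abacus "maya_set la" "int g" using abacus_maya_set la assms(2) by simp
  have "class_max (maya_set la) (int g) (int r)
      + class_max (maya_set la) (int g) ((- 1 - int r) mod int g) = - 1 - int g"
    by (rule class_max_reflect[OF _ _ maya_set_SC_reflect[OF la(1,2)]]) (use assms(2) in auto)
  moreover have "(- 1 - int r) mod int g = int (g - 1 - r)"
    using of_nat_diff_period_mod[of "g - 1 - r" g] assms(2) by (simp add: of_nat_diff)
  ultimately show ?thesis by (simp add: beta_eq_class_max)
qed

section \<open>The V-coding\<close>

lemma card_involution_half:
  assumes "finite I" "\<And>r. r \<in> I \<Longrightarrow> \<sigma> r \<in> I" "\<And>r. r \<in> I \<Longrightarrow> \<sigma> (\<sigma> r) = r"
    and "\<And>r. r \<in> I \<Longrightarrow> P (\<sigma> r) \<longleftrightarrow> \<not> P r"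
  shows "2 * card {r \<in> I. P r} = card I"
proof -
  let ?A = "{r \<in> I. P r}" and ?B = "{r \<in> I. \<not> P r}"
  have "\<sigma> ` ?A = ?B"
  proof (intro equalityI subsetI)
    fix r assume "r \<in> \<sigma> ` ?A"
    then show "r \<in> ?B" using assms(2,4) by auto
  next
    fix r assume "r \<in> ?B"
    then have "\<sigma> r \<in> ?A" "r = \<sigma> (\<sigma> r)" using assms(2-4) by auto
    then show "r \<in> \<sigma> ` ?A" by blast
  qed
  moreover have "inj_on \<sigma> ?A" by (rule inj_on_inverseI[where g = \<sigma>]) (use assms(3) in auto)
  ultimately have "card ?B = card ?A" by (metis card_image)
  moreover have "card I = card ?A + card ?B"
  proof -
    have "I = ?A \<union> ?B" by auto
    then show ?thesis using assms(1) card_Un_disjoint[of ?A ?B] by auto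
  qed
  ultimately show ?thesis by simp
qed

lemma card_beta_above_DD_core:
  assumes "la \<in> DD_core (2*t+2)"
  shows "card {r. r < 2*t+2 \<and> int (t+1) < beta (2*t+2) la r} = t"
proof -
  let ?g = "2*t+2" and ?b = "beta (2*t+2) la"
  have core: "is_partition la" "is_core ?g la" using assms by (auto simp: DD_core_def)
  have reflect: "?b r + ?b (?g - r) = int ?g" if "0 < r" "r < ?g" for r
    using beta_DD_core_reflect[OF assms] that by simp
  have "?b 0 = 0" using beta_DD_core_zero[OF assms] by simp
  moreover have "?b (t+1) = int (t+1)" using reflect[of "t+1"] by simp
  ultimately have above: "r \<noteq> 0 \<and> r \<noteq> t+1" if "int (t+1) < ?b r" for r
    using that by (cases "r = 0"; cases "r = t+1") auto
  define I where "I = {r. 0 < r \<and> r < ?g \<and> r \<noteq> t+1}"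
  have "{r. r < ?g \<and> int (t+1) < ?b r} = {r \<in> I. int (t+1) < ?b r}"
    using above by (auto simp: I_def)
  moreover have "2 * card {r \<in> I. int (t+1) < ?b r} = card I"
  proof (rule card_involution_half[where \<sigma> = "\<lambda>r. ?g - r"])
    fix r assume r: "r \<in> I"
    have "?b r \<noteq> int (t+1)" using beta_neq_if_neq[OF core, of r "t+1"] r by (simp add: I_def)
    then show "int (t+1) < ?b (?g - r) \<longleftrightarrow> \<not> int (t+1) < ?b r"
      using reflect[of r] r by (auto simp: I_def)
  qed (auto simp: I_def)
  moreover have "I = {1..2*t+1} - {t+1}" by (auto simp: I_def)
  ultimately show ?thesis by simp
qed

lemma card_beta_above_SC_core:
  assumes "la \<in> SC_core (2*t)"
  shows "card {r. r < 2*t \<and> int t - 1 < beta (2*t) la r} = t"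
proof -
  have "2 * card {r \<in> {..<2*t}. int t - 1 < beta (2*t) la r} = card {..<2*t}"
  proof (rule card_involution_half[where \<sigma> = "\<lambda>r. 2*t - 1 - r"])
    fix r assume "r \<in> {..<2*t}"
    then show "int t - 1 < beta (2*t) la (2*t - 1 - r) \<longleftrightarrow> \<not> int t - 1 < beta (2*t) la r"
      using beta_SC_core_reflect[OF assms, of r] by auto
  qed auto
  then show ?thesis by simp
qed

lemma set_take_rev_sort:
  fixes xs :: "'a::linorder list"
  assumes "length (filter (\<lambda>x. c < x) xs) = t"
  shows "set (take t (rev (sort xs))) = {x \<in> set xs. c < x}"
proof -
  let ?ys = "rev (sort xs)"
  have "filter (\<lambda>x. c < x) ?ys = takeWhile (\<lambda>x. c < x) ?ys"
    using filter_equals_takeWhile_sorted_rev[of id ?ys c] by simp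
  moreover have "length (filter (\<lambda>x. c < x) ?ys) = t"
    using assms by (simp add: rev_filter[symmetric] filter_sort)
  ultimately have "take t ?ys = filter (\<lambda>x. c < x) ?ys" by (metis takeWhile_eq_take)
  then show ?thesis by simp
qed

lemma set_Vcoding:
  assumes "card {r. r < g \<and> c < beta g la r} = t"
  shows "set (Vcoding g t la) = {x \<in> beta g la ` {..<g}. c < x}"
proof -
  have "{i. i < g \<and> c < map (beta g la) [0..<g] ! i} = {r. r < g \<and> c < beta g la r}" by auto
  then have "length (filter (\<lambda>x. c < x) (map (beta g la) [0..<g])) = t"
    using assms by (simp add: length_filter_conv_card)
  then show ?thesis unfolding Vcoding_def by (subst set_take_rev_sort) auto
qed

text \<open>Coded values are told apart by their residues, so a common coded value sits at a
  common index.\<close>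

lemma beta_eq_if_Vcoding_eq:
  assumes "is_partition la" "is_core g la" "is_partition mu" "is_core g mu"
    and card_la: "card {r. r < g \<and> c < beta g la r} = t"
    and card_mu: "card {r. r < g \<and> c < beta g mu r} = t"
    and "Vcoding g t la = Vcoding g t mu" "r < g" "c < beta g la r"
  shows "beta g mu r = beta g la r"
proof -
  have "beta g la r \<in> set (Vcoding g t la)" using set_Vcoding[OF card_la] assms(8,9) by auto
  then obtain r' where r': "r' < g" "beta g la r = beta g mu r'"
    using set_Vcoding[OF card_mu] assms(7) by auto
  then have "int r' = int r" using beta_mod[OF assms(1,2,8)] beta_mod[OF assms(3,4) r'(1)] by simp
  then show ?thesis using r' by simp
qed

lemma inj_on_Vcoding_DD_core: "inj_on (Vcoding (2*t+2) t) (DD_core (2*t+2))"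
proof (rule inj_onI)
  let ?g = "2*t+2"
  fix la mu assume la: "la \<in> DD_core ?g" and mu: "mu \<in> DD_core ?g"
    and coding_eq: "Vcoding ?g t la = Vcoding ?g t mu"
  have core: "is_partition nu" "is_core ?g nu" if "nu \<in> DD_core ?g" for nu
    using that by (auto simp: DD_core_def)
  have top: "beta ?g mu r = beta ?g la r" if "r < ?g" "int (t+1) < beta ?g la r" for r
    using beta_eq_if_Vcoding_eq[OF core[OF la] core[OF mu] card_beta_above_DD_core[OF la]
        card_beta_above_DD_core[OF mu] coding_eq] that .
  have reflect: "beta ?g nu r + beta ?g nu (?g - r) = int ?g"
    if "nu \<in> DD_core ?g" "0 < r" "r < ?g" for nu r
    using beta_DD_core_reflect[OF that(1)] that(2,3) by simp
  have "beta ?g la r = beta ?g mu r" if r: "r < ?g" for r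
  proof -
    consider "r = 0" | "r = t+1" | "int (t+1) < beta ?g la r"
      | "0 < r" "r \<noteq> t+1" "beta ?g la r \<le> int (t+1)" by linarith
    then show ?thesis
    proof cases
      case 1
      then show ?thesis using beta_DD_core_zero la mu by simp
    next
      case 2
      then show ?thesis using reflect[OF la, of r] reflect[OF mu, of r] by simp
    next
      case 3
      then show ?thesis using top r by simp
    next
      case 4
      then have "beta ?g la r \<noteq> int (t+1)"
        using beta_neq_if_neq[OF core[OF la] r, of "t+1"] by simp
      then have "int (t+1) < beta ?g la (?g - r)" using reflect[OF la, of r] 4 r by simp
      then show ?thesis
        using top[of "?g - r"] reflect[OF la, of r] reflect[OF mu, of r] 4 r by simp
    qed
  qed
  then show "la = mu" using partition_eq_if_beta_eq[OF core[OF la] core[OF mu]] by simp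
qed

lemma inj_on_Vcoding_SC_core:
  assumes "1 \<le> t"
  shows "inj_on (Vcoding (2*t) t) (SC_core (2*t))"
proof (rule inj_onI)
  fix la mu assume la: "la \<in> SC_core (2*t)" and mu: "mu \<in> SC_core (2*t)"
    and coding_eq: "Vcoding (2*t) t la = Vcoding (2*t) t mu"
  have core: "is_partition nu" "is_core (2*t) nu" if "nu \<in> SC_core (2*t)" for nu
    using that by (auto simp: SC_core_def)
  have top: "beta (2*t) mu r = beta (2*t) la r" if "r < 2*t" "int t - 1 < beta (2*t) la r" for r
    using beta_eq_if_Vcoding_eq[OF core[OF la] core[OF mu] card_beta_above_SC_core[OF la]
        card_beta_above_SC_core[OF mu] coding_eq] that .
  have "beta (2*t) la r = beta (2*t) mu r" if r: "r < 2*t" for r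
  proof (cases "int t - 1 < beta (2*t) la r")
    case True
    then show ?thesis using top r by simp
  next
    case False
    then have "int t - 1 < beta (2*t) la (2*t - 1 - r)"
      using beta_SC_core_reflect[OF la r] by simp
    then show ?thesis
      using top[of "2*t - 1 - r"] beta_SC_core_reflect[OF la r] beta_SC_core_reflect[OF mu r] r
      by simp
  qed
  then show "la = mu" using partition_eq_if_beta_eq[OF core[OF la] core[OF mu]] assms by simp
qed

theorem proposition3p3:
  fixes t :: nat
  assumes "t \<ge> 1"
  shows "inj_on (Vcoding (2 * t + 2) t) (DD_core (2 * t + 2)) \<and>
         inj_on (Vcoding (2 * t) t) (SC_core (2 * t))"
  using inj_on_Vcoding_DD_core inj_on_Vcoding_SC_core[OF assms] by simp

end
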